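(* Let $A$ be a vector space with bilinear operations $\star,[-,-]$, and $x\cdot y=x\star y+y\star x$. (1) If $(A,\cdot,[-,-])$ is a transposed Poisson algebra, $(A,\star)$ is Zinbiel, and $(\mathcal{L}_{\star},\mathrm{ad},A)$ is a representation of the transposed Poisson algebra $(A,\cdot,[-,-])$, then $(A,\star,[-,-])$ is a TZLO algebra, i.e. $x\star[y,z]=[x,y]\star z=[x,y\star z]=0$ for all $x,y,z\in A$. (2) Conversely, if $(A,\star,[-,-])$ is a TZLO algebra, then $(A,\cdot,[-,-])$ is a transposed Poisson algebra with representation $(\mathcal{L}_{\star},\mathrm{ad},A)$.
   Context: Finite-dimensional spaces, characteristic zero. $\mathcal{L}_\star(x)y=x\star y$, $\mathrm{ad}(x)y=[x,y]$. Zinbiel: $x\star(y\star z)=(x\star y)\star z+(y\star x)\star z$. Transposed Poisson algebra: $(A,\cdot)$ commutative associative, $(A,[-,-])$ Lie, $2z\cdot[x,y]=[z\cdot x,y]+[x,z\cdot y]$. A representation of a transposed Poisson algebra is $(\mu,\rho,V)$ with $\mu(x\cdot y)=\mu(x)\mu(y)$, $\rho([x,y])=[\rho(x),\rho(y)]$, $2\mu(x)\rho(y)=\rho(x\cdot y)+\rho(y)\mu(x)$, $2\mu([x,y])=\rho(x)\mu(y)-\rho(y)\mu(x)$. A TZLO algebra is $(A,\star,[-,-])$ with $(A,\star)$ Zinbiel, $(A,[-,-])$ Lie, and $x\star[y,z]=[x,y]\star z=[x,y\star z]=0$ for all $x,y,z$. *)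

theory Defs
  imports Complex_Main
begin

definition fin_dim_vs :: "('k::field_char_0 \<Rightarrow> 'v::ab_group_add \<Rightarrow> 'v) \<Rightarrow> bool" where
  "fin_dim_vs sc \<longleftrightarrow> (\<exists>B. finite_dimensional_vector_space sc B)"

definition bilinear_op :: "('k::field \<Rightarrow> 'v::ab_group_add \<Rightarrow> 'v) \<Rightarrow> ('v \<Rightarrow> 'v \<Rightarrow> 'v) \<Rightarrow> bool" where
  "bilinear_op sc m \<longleftrightarrow> (\<forall>x. Vector_Spaces.linear sc sc (m x)) \<and> (\<forall>y. Vector_Spaces.linear sc sc (\<lambda>x. m x y))"

definition zinbiel :: "('v \<Rightarrow> 'v \<Rightarrow> 'v::ab_group_add) \<Rightarrow> bool" where
  "zinbiel st \<longleftrightarrow> (\<forall>x y z. st x (st y z) = st (st x y) z + st (st y x) z)"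

definition lie_alg :: "('v \<Rightarrow> 'v \<Rightarrow> 'v::ab_group_add) \<Rightarrow> bool" where
  "lie_alg br \<longleftrightarrow> (\<forall>x. br x x = 0) \<and>
     (\<forall>x y z. br x (br y z) + br y (br z x) + br z (br x y) = 0)"

definition comm_assoc_alg :: "('v \<Rightarrow> 'v \<Rightarrow> 'v) \<Rightarrow> bool" where
  "comm_assoc_alg m \<longleftrightarrow> (\<forall>x y. m x y = m y x) \<and> (\<forall>x y z. m (m x y) z = m x (m y z))"

definition transposed_poisson :: "('k::field \<Rightarrow> 'v::ab_group_add \<Rightarrow> 'v) \<Rightarrow> ('v \<Rightarrow> 'v \<Rightarrow> 'v) \<Rightarrow> ('v \<Rightarrow> 'v \<Rightarrow> 'v) \<Rightarrow> bool" where
  "transposed_poisson sc dot br \<longleftrightarrow> comm_assoc_alg dot \<and> lie_alg br \<and>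
     (\<forall>x y z. sc 2 (dot z (br x y)) = br (dot z x) y + br x (dot z y))"

text \<open>Representation (mu, rho, V) of the transposed Poisson algebra (A, dot, br):
mu, rho linear maps from A to linear endomorphisms of V, satisfying the four identities
(compositions written pointwise on v in V).\<close>

definition tp_rep :: "('k::field \<Rightarrow> 'v::ab_group_add \<Rightarrow> 'v) \<Rightarrow> ('k \<Rightarrow> 'w::ab_group_add \<Rightarrow> 'w)
    \<Rightarrow> ('v \<Rightarrow> 'v \<Rightarrow> 'v) \<Rightarrow> ('v \<Rightarrow> 'v \<Rightarrow> 'v) \<Rightarrow> ('v \<Rightarrow> 'w \<Rightarrow> 'w) \<Rightarrow> ('v \<Rightarrow> 'w \<Rightarrow> 'w) \<Rightarrow> bool" where
  "tp_rep scA scV dot br \<mu> \<rho> \<longleftrightarrow>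
     (\<forall>x. Vector_Spaces.linear scV scV (\<mu> x)) \<and> (\<forall>x. Vector_Spaces.linear scV scV (\<rho> x)) \<and>
     (\<forall>v. Vector_Spaces.linear scA scV (\<lambda>x. \<mu> x v)) \<and> (\<forall>v. Vector_Spaces.linear scA scV (\<lambda>x. \<rho> x v)) \<and>
     (\<forall>x y v. \<mu> (dot x y) v = \<mu> x (\<mu> y v)) \<and>
     (\<forall>x y v. \<rho> (br x y) v = \<rho> x (\<rho> y v) - \<rho> y (\<rho> x v)) \<and>
     (\<forall>x y v. scV 2 (\<mu> x (\<rho> y v)) = \<rho> (dot x y) v + \<rho> y (\<mu> x v)) \<and>
     (\<forall>x y v. scV 2 (\<mu> (br x y) v) = \<rho> x (\<mu> y v) - \<rho> y (\<mu> x v))"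

definition tzlo :: "('v \<Rightarrow> 'v \<Rightarrow> 'v::ab_group_add) \<Rightarrow> ('v \<Rightarrow> 'v \<Rightarrow> 'v) \<Rightarrow> bool" where
  "tzlo st br \<longleftrightarrow> zinbiel st \<and> lie_alg br \<and>
     (\<forall>x y z. st x (br y z) = 0 \<and> st (br x y) z = 0 \<and> br x (st y z) = 0)"

end

theory Submission
  imports Defs
begin

text \<open>With \<open>\<mu> = L\<^sub>\<star>\<close> and \<open>\<rho> = ad\<close>, subtracting the third representation identity from the
  transposed Poisson identity gives \<open>2 [x,y]\<star>z = [x, y\<star>z]\<close>; comparing with the fourth
  representation identity forces \<open>[y, x\<star>z] = 0\<close>, and then \<open>[x,y]\<star>z = 0\<close> and
  \<open>z\<star>[x,y] = 0\<close> follow since \<open>2\<close> is invertible. Conversely, when all mixed products vanish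
  every identity involving the bracket reduces to \<open>0 = 0\<close> or to the Jacobi identity, and the
  remaining ones (associativity of the anticommutator and \<open>L\<^sub>\<star>(x\<cdot>y) = L\<^sub>\<star>(x) L\<^sub>\<star>(y)\<close>)
  are consequences of the Zinbiel identity.\<close>

lemma linear_add: "Vector_Spaces.linear s s f \<Longrightarrow> f (a + b) = f a + f b"
  using module_hom.add[OF module_hom_linearI] by blast

lemma bilinear_op_add_left: "bilinear_op sc m \<Longrightarrow> m (a + b) c = m a c + m b c"
  unfolding bilinear_op_def using linear_add[of sc "\<lambda>x. m x c"] by blast

lemma bilinear_op_add_right: "bilinear_op sc m \<Longrightarrow> m c (a + b) = m c a + m c b"
  unfolding bilinear_op_def using linear_add[of sc "m c"] by blast

lemma bilinear_op_zero_right: "bilinear_op sc m \<Longrightarrow> m c 0 = 0"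
  using bilinear_op_add_right[of sc m c 0 0] by simp

lemma bilinear_op_minus_right: "bilinear_op sc m \<Longrightarrow> m c (- a) = - m c a"
  using bilinear_op_add_right[of sc m c a "- a"] bilinear_op_zero_right[of sc m c]
  by (simp add: eq_neg_iff_add_eq_0 add.commute)

lemma fin_dim_vs_vector_space: "fin_dim_vs sc \<Longrightarrow> vector_space sc"
  unfolding fin_dim_vs_def using finite_dimensional_vector_space.axioms(1) by blast

lemma lie_alg_antisym:
  assumes "bilinear_op sc br" "lie_alg br"
  shows "br y x = - br x y"
proof -
  have "br (x + y) (x + y) = 0" "br x x = 0" "br y y = 0"
    using assms(2) unfolding lie_alg_def by blast+
  then have "br x y + br y x = 0"
    using bilinear_op_add_left[OF assms(1)] bilinear_op_add_right[OF assms(1)] by (simp add: add_ac)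
  then show ?thesis by (simp add: eq_neg_iff_add_eq_0 add.commute)
qed

lemma lie_alg_ad_bracket:
  assumes "bilinear_op sc br" "lie_alg br"
  shows "br (br x y) v = br x (br y v) - br y (br x v)"
proof -
  have "br x (br y v) + br y (br v x) + br v (br x y) = 0"
    using assms(2) unfolding lie_alg_def by blast
  moreover have "br y (br v x) = - br y (br x v)"
    using lie_alg_antisym[OF assms, of x v] bilinear_op_minus_right[OF assms(1)] by simp
  moreover have "br v (br x y) = - br (br x y) v"
    using lie_alg_antisym[OF assms, of "br x y" v] by simp
  ultimately show ?thesis by (simp add: algebra_simps)
qed

lemma zinbiel_left_mult_sym:
  assumes "bilinear_op sc st" "zinbiel st"
  shows "st (st x y + st y x) v = st x (st y v)"
  using assms unfolding zinbiel_def by (simp add: bilinear_op_add_left)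

lemma zinbiel_sym_comm_assoc:
  assumes "bilinear_op sc st" "zinbiel st"
  shows "comm_assoc_alg (\<lambda>x y. st x y + st y x)"
  unfolding comm_assoc_alg_def
proof (intro conjI allI)
  fix x y z
  show "st x y + st y x = st y x + st x y" by (rule add.commute)
  have Z: "\<And>x y z. st x (st y z) = st (st x y) z + st (st y x) z"
    using assms(2) unfolding zinbiel_def by blast
  have "st z (st x y) = st x (st z y)" using Z[of z x y] Z[of x z y] by (simp add: add.commute)
  then show "st (st x y + st y x) z + st z (st x y + st y x)
      = st x (st y z + st z y) + st (st y z + st z y) x"
    using Z[of x y z] Z[of z y x] bilinear_op_add_left[OF assms(1)] bilinear_op_add_right[OF assms(1)]
    by (simp add: algebra_simps)
qed

lemma tp_rep_left_mult_ad_mixed_zero: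
  fixes sc :: "'k::field_char_0 \<Rightarrow> 'v::ab_group_add \<Rightarrow> 'v"
  assumes V: "vector_space sc" and st: "bilinear_op sc st" and br: "bilinear_op sc br"
    and TP: "transposed_poisson sc (\<lambda>x y. st x y + st y x) br"
    and R: "tp_rep sc sc (\<lambda>x y. st x y + st y x) br st br"
  shows "st x (br y z) = 0 \<and> st (br x y) z = 0 \<and> br x (st y z) = 0"
proof -
  interpret vector_space sc by (fact V)
  have lie: "lie_alg br"
    and tp: "\<And>x y z. sc 2 (st z (br x y) + st (br x y) z)
                        = br (st z x + st x z) y + br x (st z y + st y z)"
    using TP unfolding transposed_poisson_def by blast+
  have rep3: "\<And>x y v. sc 2 (st x (br y v)) = br (st x y + st y x) v + br y (st x v)"
    and rep4: "\<And>x y v. sc 2 (st (br x y) v) = br x (st y v) - br y (st x v)"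
    using R unfolding tp_rep_def by blast+
  note add = bilinear_op_add_left[OF st] bilinear_op_add_right[OF st]
    bilinear_op_add_left[OF br] bilinear_op_add_right[OF br]
  have double_left: "sc 2 (st (br x y) z) = br x (st y z)" for x y z
    using tp[of z x y] rep3[of z x y] add by (simp add: scale_right_distrib algebra_simps)
  have br_st: "br y (st x z) = 0" for x y z
    using double_left[of x y z] rep4[of x y z] by simp
  have st_br_left: "st (br x y) z = 0" for x y z
    using double_left[of x y z] br_st by simp
  have "sc 2 (st x (br y z)) = 0"
    using rep3[of x y z] br_st lie_alg_antisym[OF br lie, of z "st x y"]
      lie_alg_antisym[OF br lie, of z "st y x"] add by simp
  then have "st x (br y z) = 0" by simp
  with br_st st_br_left show ?thesis by blast
qed

lemma tzlo_transposed_poisson: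
  assumes V: "vector_space sc" and st: "bilinear_op sc st" and br: "bilinear_op sc br"
    and T: "tzlo st br"
  shows "transposed_poisson sc (\<lambda>x y. st x y + st y x) br"
proof -
  interpret vector_space sc by (fact V)
  have lie: "lie_alg br" and Z: "zinbiel st"
    and mixed: "\<And>x y z. st x (br y z) = 0" "\<And>x y z. st (br x y) z = 0" "\<And>x y z. br x (st y z) = 0"
    using T unfolding tzlo_def by blast+
  have "br (st z x + st x z) y + br x (st z y + st y z) = 0" for x y z
    using lie_alg_antisym[OF br lie, of y "st z x + st x z"] mixed(3) bilinear_op_add_right[OF br]
    by simp
  then show ?thesis
    unfolding transposed_poisson_def using lie zinbiel_sym_comm_assoc[OF st Z] mixed by simp
qed

lemma tzlo_tp_rep:
  assumes V: "vector_space sc" and st: "bilinear_op sc st" and br: "bilinear_op sc br"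
    and T: "tzlo st br"
  shows "tp_rep sc sc (\<lambda>x y. st x y + st y x) br st br"
proof -
  interpret vector_space sc by (fact V)
  have lie: "lie_alg br" and Z: "zinbiel st"
    and mixed: "\<And>x y z. st x (br y z) = 0" "\<And>x y z. st (br x y) z = 0" "\<And>x y z. br x (st y z) = 0"
    using T unfolding tzlo_def by blast+
  have "br (st x y + st y x) v = 0" for x y v
    using lie_alg_antisym[OF br lie, of v "st x y + st y x"] mixed(3) bilinear_op_add_right[OF br]
    by simp
  then show ?thesis
    unfolding tp_rep_def
    using st br zinbiel_left_mult_sym[OF st Z] lie_alg_ad_bracket[OF br lie] mixed
    unfolding bilinear_op_def by simp
qed

theorem mainTheorem10:
  fixes sc :: "'k::field_char_0 \<Rightarrow> 'v::ab_group_add \<Rightarrow> 'v"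
    and st br :: "'v \<Rightarrow> 'v \<Rightarrow> 'v"
  assumes "fin_dim_vs sc"
    and "bilinear_op sc st" and "bilinear_op sc br"
  shows "(transposed_poisson sc (\<lambda>x y. st x y + st y x) br \<and> zinbiel st \<and>
           tp_rep sc sc (\<lambda>x y. st x y + st y x) br st br
          \<longrightarrow> tzlo st br)
       \<and> (tzlo st br \<longrightarrow>
           transposed_poisson sc (\<lambda>x y. st x y + st y x) br \<and>
           tp_rep sc sc (\<lambda>x y. st x y + st y x) br st br)"
proof -
  have V: "vector_space sc" using fin_dim_vs_vector_space[OF assms(1)] .
  show ?thesis
  proof (intro conjI impI; (elim conjE)?)
    assume TP: "transposed_poisson sc (\<lambda>x y. st x y + st y x) br" and "zinbiel st"
      and "tp_rep sc sc (\<lambda>x y. st x y + st y x) br st br"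
    moreover have "lie_alg br" using TP unfolding transposed_poisson_def by blast
    ultimately show "tzlo st br"
      unfolding tzlo_def using tp_rep_left_mult_ad_mixed_zero[OF V assms(2,3)] by blast
  qed (use V assms(2,3) tzlo_transposed_poisson tzlo_tp_rep in blast)+
qed

end
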